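(* The following three subalgebras of the $q$-shuffle algebra $(\mathbb V,\star)$ coincide: (i) the subalgebra generated by $\{C_n\}_{n=1}^\infty$; (ii) the subalgebra generated by $\{xC_ny\}_{n=0}^\infty$ (free products $xC_ny$); (iii) the subalgebra generated by $\{\tilde G_n\}_{n=1}^\infty$, where $\tilde G_n=xyxy\cdots xy$ is the word consisting of $n$ consecutive copies of $xy$.
   Context: $\mathbb F$ is a field of characteristic zero and $q\in\mathbb F$ is nonzero and not a root of unity; $[n]_q=(q^n-q^{-n})/(q-q^{-1})$. $\mathbb V$ is the free algebra on noncommuting letters $x,y$; a word is a product of letters (the empty word is $1$), and words form a basis. The $q$-shuffle product $\star$ on $\mathbb V$ is the bilinear product with $1\star v=v\star 1=v$ and, for nontrivial words $u=u_1\cdots u_r$, $v=v_1\cdots v_s$ (letters $u_i,v_j$), $u\star v=u_1\bigl((u_2\cdots u_r)\star v\bigr)+v_1\bigl(u\star(v_2\cdots v_s)\bigr)q^{(u_1,v_1)+(u_2,v_1)+\cdots+(u_r,v_1)}$, where juxtaposition is concatenation and $(x,x)=(y,y)=2$, $(x,y)=(y,x)=-2$. Subalgebras contain the identity $1$. Set $\overline x=1$, $\overline y=-1$. A word $u_1\cdots u_n$ is Catalan if $\overline u_1+\cdots+\overline u_i\ge0$ for $1\le i\le n-1$ and $=0$ for $i=n$. For $n\in\mathbb N$, $C_n=\sum u_1u_2\cdots u_{2n}\,[1]_q[1+\overline u_1]_q[1+\overline u_1+\overline u_2]_q\cdots[1+\overline u_1+\cdots+\overline u_{2n}]_q$, summed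 over all Catalan words of length $2n$ (so $C_0=1$). *)

theory Defs
  imports Main
begin

text \<open>Words are lists of letters; an element of V is represented by its coefficient
  function on words (only finitely supported ones arise below).\<close>

datatype letter = X | Y

type_synonym 'f vec = "letter list \<Rightarrow> 'f"

definition ip :: "letter \<Rightarrow> letter \<Rightarrow> int" where
  "ip a b = (if a = b then 2 else -2)"

definition lcons :: "letter \<Rightarrow> 'f::zero vec \<Rightarrow> 'f vec" where
  "lcons a f = (\<lambda>w. case w of [] \<Rightarrow> 0 | c # w' \<Rightarrow> (if c = a then f w' else 0))"

definition rsnoc :: "'f::zero vec \<Rightarrow> letter \<Rightarrow> 'f vec" where
  "rsnoc f b = (\<lambda>w. if w \<noteq> [] \<and> last w = b then f (butlast w) else 0)"

definition single_word :: "letter list \<Rightarrow> 'f::{zero,one} vec" where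
  "single_word u = (\<lambda>w. if w = u then 1 else 0)"

function qsh :: "'f::field \<Rightarrow> letter list \<Rightarrow> letter list \<Rightarrow> 'f vec" where
  "qsh q [] v = single_word v"
| "qsh q (a # u) [] = single_word (a # u)"
| "qsh q (a # u) (b # v) =
     (\<lambda>w. lcons a (qsh q u (b # v)) w
          + q powi (\<Sum>c\<leftarrow>a # u. ip c b) * lcons b (qsh q (a # u) v) w)"
  by pat_completeness auto
termination by (relation "measure (\<lambda>(q, u, v). length u + length v)") auto

definition supp :: "'f::zero vec \<Rightarrow> letter list set" where
  "supp f = {u. f u \<noteq> 0}"

definition qstar :: "'f::field \<Rightarrow> 'f vec \<Rightarrow> 'f vec \<Rightarrow> 'f vec" where
  "qstar q f g = (\<lambda>w. \<Sum>u\<in>supp f. \<Sum>v\<in>supp g. f u * g v * qsh q u v w)"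

inductive_set gen_subalg :: "'f::field \<Rightarrow> 'f vec set \<Rightarrow> 'f vec set"
  for q :: 'f and S :: "'f vec set" where
  one: "single_word [] \<in> gen_subalg q S"
| base: "s \<in> S \<Longrightarrow> s \<in> gen_subalg q S"
| add: "a \<in> gen_subalg q S \<Longrightarrow> b \<in> gen_subalg q S \<Longrightarrow> (\<lambda>w. a w + b w) \<in> gen_subalg q S"
| smult: "a \<in> gen_subalg q S \<Longrightarrow> (\<lambda>w. c * a w) \<in> gen_subalg q S"
| star: "a \<in> gen_subalg q S \<Longrightarrow> b \<in> gen_subalg q S \<Longrightarrow> qstar q a b \<in> gen_subalg q S"

definition qint :: "'f::field \<Rightarrow> int \<Rightarrow> 'f" where
  "qint q n = (q powi n - q powi (- n)) / (q - inverse q)"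

definition lbar :: "letter \<Rightarrow> int" where
  "lbar a = (if a = X then 1 else -1)"

definition psum :: "letter list \<Rightarrow> nat \<Rightarrow> int" where
  "psum w i = (\<Sum>a\<leftarrow>take i w. lbar a)"

definition catalan :: "letter list \<Rightarrow> bool" where
  "catalan w \<longleftrightarrow> (\<forall>i\<in>{1..length w - 1}. psum w i \<ge> 0) \<and> psum w (length w) = 0"

definition Cat :: "'f::field \<Rightarrow> nat \<Rightarrow> 'f vec" where
  "Cat q n = (\<lambda>w. if catalan w \<and> length w = 2 * n
                  then (\<Prod>i = 0..2 * n. qint q (1 + psum w i)) else 0)"

definition Gt :: "nat \<Rightarrow> 'f::{zero,one} vec" where
  "Gt n = single_word (concat (replicate n [X, Y]))"

end

theory Submission
  imports Defs
begin

text \<open>Read a word as a lattice path, with \<open>x\<close> a step up and \<open>y\<close> a step down. Then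
  \<open>C n\<close>, \<open>x C n y\<close> and \<open>G n = (xy)^n\<close> are the degree \<open>2n\<close> parts of generating
  series of weighted Dyck paths. The q-shuffle of two path series is again a path series whenever
  the weights satisfy a Leibniz-type recursion for the first letter. For each of the three
  families \<open>A\<close> this yields a triangular identity
  \<open>\<Sum>a\<le>n. c n a * (A a \<star> H (n - a)) = \<kappa> n * H n\<close> with the homogeneous parts \<open>H n\<close>
  of one fixed path series. Since \<open>q\<close> is not a root of unity and the characteristic is 0, the
  diagonal coefficients are invertible, so each family and the \<open>H n\<close> generate each other.\<close>

section \<open>The q-shuffle product on formal series\<close>

lemma finite_words_length_le: "finite {w :: letter list. length w \<le> n}"
proof -
  have "set w \<subseteq> {X, Y}" for w :: "letter list"
    using letter.exhaust by blast
  moreover have "finite {w. set w \<subseteq> {X, Y} \<and> length w \<le> n}"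
    by (rule finite_lists_length_le) simp
  ultimately show ?thesis by simp
qed

lemma finite_supp_if_length_eq: "(\<And>w. f w \<noteq> 0 \<Longrightarrow> length w = m) \<Longrightarrow> finite (supp f)"
  by (rule finite_subset[OF _ finite_words_length_le[of m]]) (auto simp: supp_def)

lemma qsh_Nil_right [simp]: "qsh q u [] = single_word u"
  by (cases u) auto

lemma qsh_Nil_word: "qsh q u v [] = (if u = [] \<and> v = [] then 1 else 0)"
  by (cases u; cases v) (auto simp: single_word_def lcons_def)

lemma qsh_Cons_word: "qsh q u v (c # w) =
    (case u of [] \<Rightarrow> 0 | a # u' \<Rightarrow> if a = c then qsh q u' v w else 0) +
    (case v of [] \<Rightarrow> 0 | b # v' \<Rightarrow> if b = c then q powi (\<Sum>x\<leftarrow>u. ip x b) * qsh q u v' w else 0)"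
  by (cases u; cases v) (auto simp: single_word_def lcons_def)

lemma qsh_nonzero_length: "qsh q u v w \<noteq> 0 \<Longrightarrow> length w = length u + length v"
proof (induction w arbitrary: u v)
  case Nil
  then show ?case by (simp add: qsh_Nil_word split: if_splits)
next
  case (Cons c w)
  then have "(u \<noteq> [] \<and> qsh q (tl u) v w \<noteq> 0) \<or> (v \<noteq> [] \<and> qsh q u (tl v) w \<noteq> 0)"
    by (auto simp: qsh_Cons_word split: list.splits if_splits)
  then show ?case
    using Cons.IH by (cases u; cases v) fastforce+
qed

definition lquot :: "letter \<Rightarrow> 'f vec \<Rightarrow> 'f vec" where
  "lquot c f = (\<lambda>w. f (c # w))"

definition qtwist :: "'f::field \<Rightarrow> letter \<Rightarrow> 'f vec \<Rightarrow> 'f vec" where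
  "qtwist q c f = (\<lambda>w. q powi (\<Sum>x\<leftarrow>w. ip x c) * f w)"

text \<open>The q-shuffle extended to series of infinite support, so that generating functions can be
  multiplied; it agrees with \<^const>\<open>qstar\<close> on finitely supported series. The recursion is
  the Leibniz rule for left quotients, read off from the defining recursion of \<^const>\<open>qsh\<close>.\<close>

fun qsh_series :: "'f::field \<Rightarrow> 'f vec \<Rightarrow> 'f vec \<Rightarrow> 'f vec" where
  "qsh_series q A B [] = A [] * B []"
| "qsh_series q A B (c # w) =
     qsh_series q (lquot c A) B w + qsh_series q (qtwist q c A) (lquot c B) w"

lemma sum_Cons_reindex:
  assumes "finite U"
  shows "(\<Sum>u\<in>U. case u of [] \<Rightarrow> 0 | a # u' \<Rightarrow> if a = c then f u' else (0::'a::comm_monoid_add))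
         = (\<Sum>u'\<in>Cons c -` U. f u')"
proof -
  have "(\<Sum>u\<in>U. case u of [] \<Rightarrow> 0 | a # u' \<Rightarrow> if a = c then f u' else 0)
      = (\<Sum>u\<in>Cons c ` (Cons c -` U). case u of [] \<Rightarrow> 0 | a # u' \<Rightarrow> if a = c then f u' else 0)"
    by (rule sum.mono_neutral_right) (auto simp: assms split: list.splits)
  also have "\<dots> = (\<Sum>u'\<in>Cons c -` U. f u')"
    by (subst sum.reindex) auto
  finally show ?thesis .
qed

lemma sum_Cons_reindex_left:
  assumes "finite U"
  shows "(\<Sum>u\<in>U. \<Sum>v\<in>V. A u * B v *
      (case u of [] \<Rightarrow> 0 | a # u' \<Rightarrow> if a = c then F u' v else (0::'a::comm_semiring_0)))
    = (\<Sum>u\<in>Cons c -` U. \<Sum>v\<in>V. A (c # u) * B v * F u v)"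
proof -
  have "(\<Sum>u\<in>U. \<Sum>v\<in>V. A u * B v * (case u of [] \<Rightarrow> 0 | a # u' \<Rightarrow> if a = c then F u' v else 0))
      = (\<Sum>u\<in>U. case u of [] \<Rightarrow> 0 | a # u' \<Rightarrow> if a = c then \<Sum>v\<in>V. A (c # u') * B v * F u' v else 0)"
    by (rule sum.cong) (auto split: list.splits)
  then show ?thesis
    using sum_Cons_reindex[OF assms] by simp
qed

lemma sum_Cons_reindex_right:
  assumes "finite V"
  shows "(\<Sum>u\<in>U. \<Sum>v\<in>V. A u * B v *
      (case v of [] \<Rightarrow> 0 | b # v' \<Rightarrow> if b = c then G u b * F u v' else (0::'a::comm_semiring_0)))
    = (\<Sum>u\<in>U. \<Sum>v\<in>Cons c -` V. A u * B (c # v) * G u c * F u v)"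
proof (rule sum.cong)
  fix u
  have "(\<Sum>v\<in>V. A u * B v * (case v of [] \<Rightarrow> 0 | b # v' \<Rightarrow> if b = c then G u b * F u v' else 0))
      = (\<Sum>v\<in>V. case v of [] \<Rightarrow> 0 | b # v' \<Rightarrow> if b = c then A u * B (c # v') * G u c * F u v' else 0)"
    by (rule sum.cong) (auto simp: mult_ac split: list.splits)
  then show "(\<Sum>v\<in>V. A u * B v * (case v of [] \<Rightarrow> 0 | b # v' \<Rightarrow> if b = c then G u b * F u v' else 0))
      = (\<Sum>v\<in>Cons c -` V. A u * B (c # v) * G u c * F u v)"
    using sum_Cons_reindex[OF assms] by simp
qed simp

lemma qsh_series_eq_sum:
  assumes "finite U" "finite V"
    and "\<And>u. A u \<noteq> 0 \<Longrightarrow> length u \<le> length w \<Longrightarrow> u \<in> U"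
    and "\<And>v. B v \<noteq> 0 \<Longrightarrow> length v \<le> length w \<Longrightarrow> v \<in> V"
  shows "qsh_series q A B w = (\<Sum>u\<in>U. \<Sum>v\<in>V. A u * B v * qsh q u v w)"
  using assms
proof (induction w arbitrary: A B U V)
  case Nil
  have "(\<Sum>u\<in>U. \<Sum>v\<in>V. A u * B v * qsh q u v []) =
        (\<Sum>u\<in>U. if u = [] then (\<Sum>v\<in>V. if v = [] then A u * B v else 0) else 0)"
    by (auto simp: qsh_Nil_word intro!: sum.cong)
  also have "\<dots> = A [] * B []"
    using Nil.prems by simp blast
  finally show ?case by simp
next
  case (Cons c w)
  let ?U' = "Cons c -` U" and ?V' = "Cons c -` V"
  have fin: "finite ?U'" "finite ?V'"
    using Cons.prems(1,2) by (simp_all add: finite_vimageI)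
  have "qsh_series q (lquot c A) B w = (\<Sum>u\<in>?U'. \<Sum>v\<in>V. A (c # u) * B v * qsh q u v w)"
    by (subst Cons.IH[where U = ?U' and V = V]) (use Cons.prems fin in \<open>auto simp: lquot_def\<close>)
  moreover have "qsh_series q (qtwist q c A) (lquot c B) w =
      (\<Sum>u\<in>U. \<Sum>v\<in>?V'. A u * B (c # v) * q powi (\<Sum>x\<leftarrow>u. ip x c) * qsh q u v w)"
    by (subst Cons.IH[where U = U and V = ?V'])
      (use Cons.prems fin in \<open>auto simp: lquot_def qtwist_def mult_ac intro!: sum.cong\<close>)
  ultimately show ?case
    using Cons.prems(1,2)
    by (simp add: qsh_Cons_word distrib_left sum.distrib sum_Cons_reindex_left
        sum_Cons_reindex_right[where G = "\<lambda>u b. q powi (\<Sum>x\<leftarrow>u. ip x b)"])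
qed

lemma qsh_series_eq_sum_length_le:
  "qsh_series q A B w =
     (\<Sum>u | length u \<le> length w. \<Sum>v | length v \<le> length w. A u * B v * qsh q u v w)"
  by (rule qsh_series_eq_sum) (auto simp: finite_words_length_le)

lemma qstar_eq_qsh_series:
  "finite (supp f) \<Longrightarrow> finite (supp g) \<Longrightarrow> qstar q f g = qsh_series q f g"
  unfolding qstar_def by (rule ext, rule qsh_series_eq_sum[symmetric]) (auto simp: supp_def)

lemma qsh_series_smult_left: "qsh_series q (\<lambda>u. c * A u) B w = c * qsh_series q A B w"
  by (simp add: qsh_series_eq_sum_length_le sum_distrib_left mult_ac)

lemma qsh_series_smult_right: "qsh_series q A (\<lambda>u. c * B u) w = c * qsh_series q A B w"
  by (simp add: qsh_series_eq_sum_length_le sum_distrib_left mult_ac)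

lemma qsh_series_zero_left [simp]: "qsh_series q (\<lambda>u. 0) B w = 0"
  by (simp add: qsh_series_eq_sum_length_le)

definition homog_part :: "nat \<Rightarrow> 'f::zero vec \<Rightarrow> 'f vec" where
  "homog_part m f = (\<lambda>w. if length w = m then f w else 0)"

lemma finite_supp_homog_part: "finite (supp (homog_part m f))"
  by (rule finite_supp_if_length_eq) (simp add: homog_part_def split: if_splits)

lemma homog_part_qsh_series:
  "homog_part m (qsh_series q A B) w =
     (\<Sum>i\<le>m. qsh_series q (homog_part i A) (homog_part (m - i) B) w)"
proof -
  let ?L = "{u. length u \<le> length w}"
  have "(\<Sum>i\<le>m. qsh_series q (homog_part i A) (homog_part (m - i) B) w) =
      (\<Sum>u\<in>?L. \<Sum>v\<in>?L. \<Sum>i\<le>m. homog_part i A u * homog_part (m - i) B v * qsh q u v w)"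
    by (simp add: qsh_series_eq_sum_length_le sum.swap[of _ "{..m}"] sum.swap[of _ "{..m}" ?L])
  also have "\<dots> = (\<Sum>u\<in>?L. \<Sum>v\<in>?L. if length w = m then A u * B v * qsh q u v w else 0)"
  proof (intro sum.cong refl)
    fix u v
    show "(\<Sum>i\<le>m. homog_part i A u * homog_part (m - i) B v * qsh q u v w) =
        (if length w = m then A u * B v * qsh q u v w else 0)"
    proof (cases "qsh q u v w = 0")
      case False
      then have "length w = length u + length v" by (rule qsh_nonzero_length)
      then have "(\<Sum>i\<le>m. homog_part i A u * homog_part (m - i) B v * qsh q u v w) =
          (\<Sum>i\<le>m. if i = length u then (if length w = m then A u * B v * qsh q u v w else 0) else 0)"
        by (intro sum.cong) (auto simp: homog_part_def)
      then show ?thesis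
        using \<open>length w = length u + length v\<close> by simp
    qed simp
  qed
  also have "\<dots> = homog_part m (qsh_series q A B) w"
    by (simp add: homog_part_def qsh_series_eq_sum_length_le)
  finally show ?thesis ..
qed

lemma homog_part_qsh_series_even:
  assumes "\<And>a. homog_part (Suc (2 * a)) A = (\<lambda>_. 0)"
  shows "homog_part (2 * n) (qsh_series q A B) w =
    (\<Sum>a\<le>n. qsh_series q (homog_part (2 * a) A) (homog_part (2 * (n - a)) B) w)"
proof -
  let ?f = "\<lambda>i. qsh_series q (homog_part i A) (homog_part (2 * n - i) B) w"
  have "homog_part (2 * n) (qsh_series q A B) w = (\<Sum>i\<le>2 * n. ?f i)"
    by (rule homog_part_qsh_series)
  also have "\<dots> = (\<Sum>i\<in>(\<lambda>a. 2 * a) ` {..n}. ?f i)"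
  proof (rule sum.mono_neutral_right)
    show "\<forall>i\<in>{..2 * n} - (\<lambda>a. 2 * a) ` {..n}. ?f i = 0"
    proof
      fix i assume "i \<in> {..2 * n} - (\<lambda>a. 2 * a) ` {..n}"
      then have "odd i" by (auto elim!: evenE)
      then obtain a where "i = Suc (2 * a)" by (auto elim!: oddE)
      then show "?f i = 0" using assms by simp
    qed
  qed auto
  also have "\<dots> = (\<Sum>a\<le>n. ?f (2 * a))"
    by (simp add: sum.reindex inj_on_def)
  finally show ?thesis
    by (simp add: right_diff_distrib')
qed

lemma length_eq_count_list_X_Y: "length w = count_list w X + count_list w Y"
proof (induction w)
  case (Cons c w) then show ?case by (cases c) auto
qed simp

lemma homog_part_odd_balanced:
  assumes "\<And>w. f w \<noteq> 0 \<Longrightarrow> count_list w X = count_list w Y"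
  shows "homog_part (Suc (2 * a)) f = (\<lambda>_. 0)"
proof
  fix w
  have "f w \<noteq> 0 \<Longrightarrow> length w \<noteq> Suc (2 * a)"
    using assms[of w] length_eq_count_list_X_Y[of w] by presburger
  then show "homog_part (Suc (2 * a)) f w = 0"
    by (auto simp: homog_part_def)
qed

lemma homog_part_lcons: "homog_part (Suc m) (lcons a f) = lcons a (homog_part m f)"
  by (rule ext) (auto simp: homog_part_def lcons_def split: list.splits)

lemma homog_part_rsnoc: "homog_part (Suc m) (rsnoc f b) = rsnoc (homog_part m f) b"
  by (rule ext) (auto simp: homog_part_def rsnoc_def)

lemma lcons_rsnoc: "lcons a (rsnoc f b) = rsnoc (lcons a f) b"
  by (rule ext) (auto simp: lcons_def rsnoc_def split: list.splits)

section \<open>Weighted lattice paths\<close>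

text \<open>A word is read as a lattice path starting at height \<open>h\<close>, with \<open>x\<close> a step up and
  \<open>y\<close> a step down; an up step from height \<open>i\<close> has weight \<open>u i\<close>, a down step from height
  \<open>i\<close> has weight \<open>d i\<close>.\<close>

fun path_series :: "(nat \<Rightarrow> 'f::semiring_1) \<Rightarrow> (nat \<Rightarrow> 'f) \<Rightarrow> nat \<Rightarrow> 'f vec" where
  "path_series u d h [] = (if h = 0 then 1 else 0)"
| "path_series u d h (X # w) = u h * path_series u d (Suc h) w"
| "path_series u d h (Y # w) = (if h = 0 then 0 else d h * path_series u d (h - 1) w)"

lemma path_series_Cons_Y:
  "d 0 = 0 \<Longrightarrow> path_series u d h (Y # w) = d h * path_series u d (h - 1) w"
  by simp

lemma path_series_nonzero_counts:
  "path_series u d h w \<noteq> 0 \<Longrightarrow> count_list w X + h = count_list w Y"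
proof (induction w arbitrary: h)
  case (Cons c w)
  show ?case
  proof (cases c)
    case X
    with Cons.prems have "path_series u d (Suc h) w \<noteq> 0" by auto
    with Cons.IH X show ?thesis by fastforce
  next
    case Y
    with Cons.prems have "h \<noteq> 0" "path_series u d (h - 1) w \<noteq> 0" by (auto split: if_splits)
    with Cons.IH[of "h - 1"] Y show ?thesis by auto
  qed
qed (simp split: if_splits)

lemma homog_part_odd_path_series: "homog_part (Suc (2 * a)) (path_series u d 0) = (\<lambda>_. 0)"
  by (rule homog_part_odd_balanced) (drule path_series_nonzero_counts, simp)

lemma path_series_scale:
  fixes \<alpha> \<beta> :: "'f::comm_semiring_1"
  shows "path_series (\<lambda>_. \<alpha>) (\<lambda>k. \<beta> * d k) h w =
    \<alpha> ^ count_list w X * \<beta> ^ count_list w Y * path_series (\<lambda>_. 1) d h w"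
proof (induction w arbitrary: h)
  case (Cons c w) then show ?case by (cases c) (simp_all add: algebra_simps)
qed simp

lemma homog_part_path_series_scale:
  fixes \<alpha> \<beta> :: "'f::comm_semiring_1"
  shows "homog_part (2 * n) (path_series (\<lambda>_. \<alpha>) (\<lambda>k. \<beta> * d k) 0) =
    (\<lambda>w. (\<alpha> * \<beta>) ^ n * homog_part (2 * n) (path_series (\<lambda>_. 1) d 0) w)"
proof
  fix w
  show "homog_part (2 * n) (path_series (\<lambda>_. \<alpha>) (\<lambda>k. \<beta> * d k) 0) w =
    (\<alpha> * \<beta>) ^ n * homog_part (2 * n) (path_series (\<lambda>_. 1) d 0) w"
  proof (cases "path_series (\<lambda>_. 1) d 0 w \<noteq> 0 \<and> length w = 2 * n")
    case True
    then have "count_list w X = n" "count_list w Y = n"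
      using path_series_nonzero_counts[of "\<lambda>_. 1" d 0 w] length_eq_count_list_X_Y[of w] by auto
    then show ?thesis
      using True by (simp add: homog_part_def path_series_scale power_mult_distrib)
  qed (auto simp: homog_part_def path_series_scale)
qed

lemma sum_ip_X: "(\<Sum>x\<leftarrow>w. ip x X) = 2 * int (count_list w X) - 2 * int (count_list w Y)"
proof (induction w)
  case (Cons c w) then show ?case by (cases c) (auto simp: ip_def)
qed simp

lemma sum_ip_Y: "(\<Sum>x\<leftarrow>w. ip x Y) = 2 * int (count_list w Y) - 2 * int (count_list w X)"
proof (induction w)
  case (Cons c w) then show ?case by (cases c) (auto simp: ip_def)
qed simp

lemma qtwist_balanced:
  assumes "\<And>w. f w \<noteq> 0 \<Longrightarrow> count_list w X = count_list w Y"
  shows "qtwist q c f = f"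
proof
  fix w
  show "qtwist q c f w = f w"
  proof (cases "f w = 0")
    case False
    then have "(\<Sum>x\<leftarrow>w. ip x c) = 0"
      using assms by (cases c) (simp_all add: sum_ip_X sum_ip_Y)
    then show ?thesis by (simp add: qtwist_def)
  qed (simp add: qtwist_def)
qed

lemma qtwist_path_series_X:
  "qtwist q X (path_series u d h) = (\<lambda>w. inverse q ^ (2 * h) * path_series u d h w)"
proof
  fix w
  show "qtwist q X (path_series u d h) w = inverse q ^ (2 * h) * path_series u d h w"
  proof (cases "path_series u d h w = 0")
    case False
    then have "(\<Sum>x\<leftarrow>w. ip x X) = - int (2 * h)"
      using path_series_nonzero_counts sum_ip_X by fastforce
    then show ?thesis
      by (simp only: qtwist_def power_int_minus power_int_of_nat power_inverse)
  qed (simp add: qtwist_def)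
qed

lemma qtwist_path_series_Y:
  "qtwist q Y (path_series u d h) = (\<lambda>w. q ^ (2 * h) * path_series u d h w)"
proof
  fix w
  show "qtwist q Y (path_series u d h) w = q ^ (2 * h) * path_series u d h w"
  proof (cases "path_series u d h w = 0")
    case False
    then have "(\<Sum>x\<leftarrow>w. ip x Y) = int (2 * h)"
      using path_series_nonzero_counts sum_ip_Y by fastforce
    then show ?thesis
      by (simp only: qtwist_def power_int_of_nat)
  qed (simp add: qtwist_def)
qed

text \<open>Twisting a path series from height \<open>h\<close> only multiplies it by \<open>q ^ (\<plusminus>2h)\<close>, so the
  Leibniz recursion of \<^const>\<open>qsh_series\<close> stays among path series; the hypotheses say that
  the factors \<open>\<rho> h k\<close> are compatible with it, letter by letter.\<close>

lemma qsh_series_path_series: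
  fixes q :: "'f::field"
  assumes up: "\<And>h k. \<rho> h k * u (h + k) =
      u1 h * \<rho> (Suc h) k + inverse q ^ (2 * h) * u2 k * \<rho> h (Suc k)"
    and down: "\<And>h k. \<rho> h k * d (h + k) =
      d1 h * \<rho> (h - 1) k + q ^ (2 * h) * d2 k * \<rho> h (k - 1)"
    and "\<rho> 0 0 = 1" and "d 0 = 0" and "d1 0 = 0" and "d2 0 = 0"
  shows "qsh_series q (path_series u1 d1 h) (path_series u2 d2 k) w =
    \<rho> h k * path_series u d (h + k) w"
proof (induction w arbitrary: h k)
  case Nil
  then show ?case using \<open>\<rho> 0 0 = 1\<close> by simp
next
  case (Cons c w)
  show ?case
  proof (cases c)
    case X
    have "qsh_series q (path_series u1 d1 h) (path_series u2 d2 k) (X # w) =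
        u1 h * qsh_series q (path_series u1 d1 (Suc h)) (path_series u2 d2 k) w +
        inverse q ^ (2 * h) * u2 k * qsh_series q (path_series u1 d1 h) (path_series u2 d2 (Suc k)) w"
      by (simp add: lquot_def qtwist_path_series_X qsh_series_smult_left qsh_series_smult_right)
    also have "\<dots> = (u1 h * \<rho> (Suc h) k + inverse q ^ (2 * h) * u2 k * \<rho> h (Suc k)) *
        path_series u d (Suc (h + k)) w"
      by (simp add: Cons.IH algebra_simps)
    also have "\<dots> = \<rho> h k * u (h + k) * path_series u d (Suc (h + k)) w"
      by (simp only: up)
    also have "\<dots> = \<rho> h k * path_series u d (h + k) (X # w)"
      by simp
    finally show ?thesis using X by simp
  next
    case Y
    have "qsh_series q (path_series u1 d1 h) (path_series u2 d2 k) (Y # w) =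
        d1 h * qsh_series q (path_series u1 d1 (h - 1)) (path_series u2 d2 k) w +
        q ^ (2 * h) * d2 k * qsh_series q (path_series u1 d1 h) (path_series u2 d2 (k - 1)) w"
      using assms(5,6)
      by (simp add: lquot_def qtwist_path_series_Y qsh_series_smult_left qsh_series_smult_right
          path_series_Cons_Y del: path_series.simps(3))
    also have "\<dots> = (d1 h * \<rho> (h - 1) k + q ^ (2 * h) * d2 k * \<rho> h (k - 1)) *
        path_series u d (h + k - 1) w"
      using assms(5,6) by (cases h; cases k) (simp_all add: Cons.IH algebra_simps)
    also have "\<dots> = \<rho> h k * d (h + k) * path_series u d (h + k - 1) w"
      by (simp only: down)
    also have "\<dots> = \<rho> h k * path_series u d (h + k) (Y # w)"
      using assms(4) by simp
    finally show ?thesis using Y by simp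
  qed
qed

section \<open>q-integers\<close>

definition qnat :: "'f::field \<Rightarrow> nat \<Rightarrow> 'f" where
  "qnat q n = (q ^ n - inverse q ^ n) / (q - inverse q)"

lemma qint_of_nat: "qint q (int n) = qnat q n"
  by (simp add: qint_def qnat_def power_int_minus power_inverse)

definition q2nat :: "'f::field \<Rightarrow> nat \<Rightarrow> 'f" where
  "q2nat q n = (\<Sum>i<n. q ^ (2 * i))"

lemma q2nat_add: "q2nat q (h + k) = q2nat q h + q ^ (2 * h) * q2nat q k"
proof (induction k)
  case (Suc k)
  have "q ^ (2 * (h + k)) = q ^ (2 * h) * q ^ (2 * k)"
    by (simp add: distrib_left power_add)
  with Suc show ?case
    by (simp add: q2nat_def distrib_left)
qed (simp add: q2nat_def)

lemma q2nat_mult_diff: "q2nat q n * (q ^ 2 - 1) = q ^ (2 * n) - 1"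
  unfolding q2nat_def power_mult by (simp only: power_diff_1_eq mult.commute)

text \<open>\<open>hdown q k = q ^ (k - 1) [k]\<^sub>q / (q - q\<^sup>-\<^sup>1)\<close> (see \<open>hdown_Suc\<close>); its additivity
  \<open>hdown_add\<close> is what makes the shuffle identities below work.\<close>

definition hdown :: "'f::field \<Rightarrow> nat \<Rightarrow> 'f" where
  "hdown q k = q2nat q k / (q - inverse q)"

lemma hdown_0 [simp]: "hdown q 0 = 0"
  by (simp add: hdown_def q2nat_def)

lemma hdown_add: "hdown q (h + k) = hdown q h + q ^ (2 * h) * hdown q k"
  by (simp add: hdown_def q2nat_add add_divide_distrib)

context
  fixes q :: "'f::field"
  assumes q_diff_inverse: "q - inverse q \<noteq> 0"
begin

lemma q_nonzero: "q \<noteq> 0"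
  using q_diff_inverse by auto

lemma pow_mult_inverse_pow [simp]: "q ^ n * inverse q ^ n = 1"
  using q_nonzero by (simp add: power_inverse)

lemma q_mult_diff_inverse: "q * (q - inverse q) = q ^ 2 - 1"
  using q_nonzero by (simp add: power2_eq_square right_diff_distrib)

lemma q_sq_minus_one_nonzero: "q ^ 2 - 1 \<noteq> 0"
  using q_mult_diff_inverse q_nonzero q_diff_inverse by force

lemma qnat_mult_diff: "qnat q n * (q - inverse q) = q ^ n - inverse q ^ n"
  using q_diff_inverse by (simp add: qnat_def)

lemma q2nat_Suc: "q2nat q (Suc n) = q ^ n * qnat q (Suc n)"
proof -
  have "q2nat q (Suc n) * (q ^ 2 - 1) = q ^ (2 * Suc n) - 1"
    by (rule q2nat_mult_diff)
  also have "\<dots> = q ^ Suc n * (q ^ Suc n - inverse q ^ Suc n)"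
    by (simp only: right_diff_distrib pow_mult_inverse_pow) (simp add: mult_2 power_add)
  also have "\<dots> = q ^ n * qnat q (Suc n) * (q * (q - inverse q))"
    by (simp only: qnat_mult_diff[symmetric]) (simp add: mult_ac)
  also have "q * (q - inverse q) = q ^ 2 - 1"
    by (rule q_mult_diff_inverse)
  finally show ?thesis
    using mult_right_cancel[OF q_sq_minus_one_nonzero] by blast
qed

lemma hdown_Suc: "hdown q (Suc n) * (q - inverse q) = q ^ n * qnat q (Suc n)"
  using q_diff_inverse by (simp add: hdown_def q2nat_Suc)

lemma hdown_1: "hdown q 1 * (q - inverse q) = 1"
  using hdown_Suc[of 0] q_diff_inverse by (simp add: qnat_def)

end

context
  fixes q :: "'f::field"
  assumes q_diff_inverse: "q - inverse q \<noteq> 0"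
    and q_not_root_of_unity: "\<And>n. 0 < n \<Longrightarrow> q ^ n \<noteq> 1"
begin

lemma hdown_nonzero: "0 < n \<Longrightarrow> hdown q n \<noteq> 0"
  using q2nat_mult_diff[of q n] q_not_root_of_unity[of "2 * n"] q_diff_inverse
  by (auto simp: hdown_def)

lemma hdown_Suc_mult: "hdown q (Suc j) * (1 - inverse q ^ (2 * j)) = qnat q (Suc j) * qnat q j"
proof -
  have "hdown q (Suc j) * (1 - inverse q ^ (2 * j)) * (q - inverse q) =
      qnat q (Suc j) * (q ^ j * (1 - inverse q ^ (2 * j)))"
    using hdown_Suc[OF q_diff_inverse, of j] by (simp add: mult_ac)
  also have "q ^ j * (1 - inverse q ^ (2 * j)) = q ^ j - inverse q ^ j"
    using pow_mult_inverse_pow[OF q_diff_inverse, of j]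
    by (simp add: mult_2 power_add right_diff_distrib mult.assoc[symmetric])
  also have "\<dots> = qnat q j * (q - inverse q)"
    using qnat_mult_diff[OF q_diff_inverse] by simp
  finally show ?thesis
    using q_diff_inverse by (simp add: mult.assoc[symmetric])
qed

end

definition Hseries :: "'f::field \<Rightarrow> nat \<Rightarrow> 'f vec" where
  "Hseries q = path_series (\<lambda>_. 1) (hdown q)"

lemma Hseries_Cons_X: "Hseries q k (X # w) = Hseries q (Suc k) w"
  by (simp add: Hseries_def)

lemma Hseries_Cons_Y: "Hseries q k (Y # w) = hdown q k * Hseries q (k - 1) w"
  by (simp add: Hseries_def)

lemma lquot_Hseries_X: "lquot X (Hseries q k) = Hseries q (Suc k)"
  by (simp add: lquot_def Hseries_Cons_X)

lemma lquot_Hseries_Y: "lquot Y (Hseries q k) = (\<lambda>w. hdown q k * Hseries q (k - 1) w)"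
  by (simp add: lquot_def Hseries_Cons_Y)

definition Hpart :: "'f::field \<Rightarrow> nat \<Rightarrow> 'f vec" where
  "Hpart q n = homog_part (2 * n) (Hseries q 0)"

lemma Hpart_0: "Hpart q 0 = single_word []"
  by (rule ext) (simp add: Hpart_def homog_part_def Hseries_def single_word_def)

lemma finite_supp_Hpart: "finite (supp (Hpart q n))"
  by (simp add: Hpart_def finite_supp_homog_part)

lemma homog_part_Hseries_scale:
  "homog_part (2 * n) (path_series (\<lambda>_. \<alpha>) (\<lambda>k. \<beta> * hdown q k) 0) = (\<lambda>w. (\<alpha> * \<beta>) ^ n * Hpart q n w)"
  by (simp add: homog_part_path_series_scale Hpart_def Hseries_def)

text \<open>A step ending at height \<open>i\<close> has weight \<open>[1 + i]\<^sub>q\<close>, as in the definition of \<^const>\<open>Cat\<close>.\<close>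

definition catalan_series :: "'f::field \<Rightarrow> nat \<Rightarrow> 'f vec" where
  "catalan_series q = path_series (\<lambda>h. qnat q (h + 2)) (qnat q)"

lemma psum_0 [simp]: "psum w 0 = 0"
  by (simp add: psum_def)

lemma psum_Cons_Suc [simp]: "psum (c # w) (Suc i) = lbar c + psum w i"
  by (simp add: psum_def)

lemma catalan_series_Cons:
  "catalan_series q h (c # w) =
    (if 0 \<le> int h + lbar c
     then qint q (1 + int h + lbar c) * catalan_series q (nat (int h + lbar c)) w else 0)"
proof (cases c)
  case X
  have "1 + int h + lbar X = int (h + 2)" "nat (int h + lbar X) = Suc h" "0 \<le> int h + lbar X"
    by (simp_all add: lbar_def)
  moreover have "catalan_series q h (X # w) = qnat q (h + 2) * catalan_series q (Suc h) w"
    by (simp add: catalan_series_def)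
  ultimately show ?thesis
    unfolding X by (simp only: qint_of_nat if_True)
next
  case Y
  show ?thesis
  proof (cases h)
    case (Suc h')
    have "1 + int h + lbar Y = int h" "nat (int h + lbar Y) = h'" "0 \<le> int h + lbar Y"
      using Suc by (simp_all add: lbar_def)
    moreover have "catalan_series q h (Y # w) = qnat q h * catalan_series q h' w"
      using Suc by (simp add: catalan_series_def)
    ultimately show ?thesis
      unfolding Y by (simp only: qint_of_nat if_True)
  qed (simp add: Y catalan_series_def lbar_def)
qed

lemma catalan_series_eq:
  "catalan_series q h w =
    (if (\<forall>i<length w. 0 \<le> int h + psum w (Suc i)) \<and> int h + psum w (length w) = 0
     then \<Prod>i<length w. qint q (1 + int h + psum w (Suc i)) else 0)"
proof (induction w arbitrary: h)
  case Nil
  then show ?case by (simp add: catalan_series_def)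
next
  case (Cons c w)
  show ?case
  proof (cases "0 \<le> int h + lbar c")
    case True
    then have "int (nat (int h + lbar c)) = int h + lbar c"
      by simp
    then show ?thesis
      using Cons.IH[of "nat (int h + lbar c)"] True
      by (auto simp: catalan_series_Cons All_less_Suc2 prod.lessThan_Suc_shift add_ac
          simp del: prod.lessThan_Suc)
  next
    case False
    then show ?thesis
      by (simp add: catalan_series_Cons All_less_Suc2)
  qed
qed

lemma catalan_iff: "catalan w \<longleftrightarrow> (\<forall>i<length w. 0 \<le> psum w (Suc i)) \<and> psum w (length w) = 0"
proof
  assume "catalan w"
  then have "0 \<le> psum w (Suc i)" if "i < length w" for i
    using that by (cases "Suc i = length w") (auto simp: catalan_def)
  with \<open>catalan w\<close> show "(\<forall>i<length w. 0 \<le> psum w (Suc i)) \<and> psum w (length w) = 0"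
    by (simp add: catalan_def)
next
  assume *: "(\<forall>i<length w. 0 \<le> psum w (Suc i)) \<and> psum w (length w) = 0"
  have "0 \<le> psum w i" if "i \<in> {1..length w - 1}" for i
    using that * by (cases i) auto
  with * show "catalan w"
    unfolding catalan_def by blast
qed

lemma Cat_eq_homog_part:
  assumes "q - inverse q \<noteq> 0"
  shows "Cat q n = homog_part (2 * n) (catalan_series q 0)"
proof
  fix w
  have "qint q 1 = 1"
    using assms by (simp add: qint_def)
  then have "(\<Prod>i = 0..length w. qint q (1 + psum w i)) = (\<Prod>i<length w. qint q (1 + psum w (Suc i)))"
    by (simp add: atLeast0AtMost prod.atMost_shift)
  then show "Cat q n w = homog_part (2 * n) (catalan_series q 0) w"
    by (auto simp: Cat_def homog_part_def catalan_series_eq catalan_iff)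
qed

lemma finite_supp_Cat: "q - inverse q \<noteq> 0 \<Longrightarrow> finite (supp (Cat q n))"
  by (simp add: Cat_eq_homog_part finite_supp_homog_part)

text \<open>Up steps are allowed only from height 0 and down steps only from height 1, so from
  height 0 only the words \<open>(xy)\<^sup>n\<close> survive.\<close>

definition xy_series :: "'f::field \<Rightarrow> nat \<Rightarrow> 'f vec" where
  "xy_series q = path_series (\<lambda>h. if h = 0 then 1 else 0) (\<lambda>h. if h = 1 then - inverse q else 0)"

abbreviation xy_word :: "nat \<Rightarrow> letter list" where
  "xy_word n \<equiv> concat (replicate n [X, Y])"

lemma length_xy_word: "length (xy_word n) = 2 * n"
  by (induction n) auto

lemma xy_series_0:
  "xy_series q 0 w =
    (if w = xy_word (length w div 2) then (- inverse q) ^ (length w div 2) else 0)"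
proof (induction w rule: induct_list012)
  case (2 c)
  then show ?case by (cases c) (simp_all add: xy_series_def)
next
  case (3 c c' w)
  then show ?case by (cases c; cases c') (simp_all add: xy_series_def)
qed (simp add: xy_series_def)

lemma homog_part_xy_series:
  "homog_part (2 * n) (xy_series q 0) = (\<lambda>w. (- inverse q) ^ n * Gt n w)"
  by (auto simp: homog_part_def xy_series_0 Gt_def single_word_def length_xy_word)

lemma Gt_0: "Gt 0 = single_word []"
  by (simp add: Gt_def)

lemma finite_supp_Gt: "finite (supp (Gt n))"
  by (simp add: Gt_def single_word_def supp_def)

text \<open>For \<open>j \<ge> 1\<close>: Catalan paths from height \<open>j - 1\<close>, followed by a last step \<open>y\<close> of weight 1
  from height 1 to 0.\<close>

definition catalan_y_series :: "'f::field \<Rightarrow> nat \<Rightarrow> 'f vec" where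
  "catalan_y_series q = path_series (\<lambda>j. if j = 0 then 0 else qnat q (Suc j))
     (\<lambda>j. if j = 1 then 1 else qnat q (j - 1))"

lemma catalan_y_series_0: "catalan_y_series q 0 w = (if w = [] then 1 else 0)"
proof (cases w)
  case (Cons c w')
  then show ?thesis by (cases c) (simp_all add: catalan_y_series_def)
qed (simp add: catalan_y_series_def)

lemma catalan_y_series_Suc: "catalan_y_series q (Suc j) = rsnoc (catalan_series q j) Y"
proof
  fix w
  show "catalan_y_series q (Suc j) w = rsnoc (catalan_series q j) Y w"
  proof (induction w arbitrary: j)
    case Nil
    then show ?case by (simp add: catalan_y_series_def rsnoc_def)
  next
    case (Cons c w)
    show ?case
    proof (cases c)
      case X
      then show ?thesis
        using Cons.IH[of "Suc j"] by (simp add: catalan_y_series_def catalan_series_def rsnoc_def)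
    next
      case Y
      show ?thesis
      proof (cases j)
        case 0
        then show ?thesis
          using Y catalan_y_series_0[of q w]
          by (auto simp: catalan_y_series_def catalan_series_def rsnoc_def)
      next
        case (Suc j')
        then show ?thesis
          using Y Cons.IH[of j'] by (simp add: catalan_y_series_def catalan_series_def rsnoc_def)
      qed
    qed
  qed
qed

definition xcy_series :: "'f::field \<Rightarrow> 'f vec" where
  "xcy_series q = lcons X (catalan_y_series q 1)"

lemma xcy_series_balanced: "xcy_series q w \<noteq> 0 \<Longrightarrow> count_list w X = count_list w Y"
  by (cases w) (auto simp: xcy_series_def catalan_y_series_def lcons_def split: if_splits
      dest!: path_series_nonzero_counts)

lemma lquot_xcy_series_X: "lquot X (xcy_series q) = catalan_y_series q 1"
  by (simp add: lquot_def xcy_series_def lcons_def)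

lemma lquot_xcy_series_Y: "lquot Y (xcy_series q) = (\<lambda>_. 0)"
  by (simp add: lquot_def xcy_series_def lcons_def)

lemma homog_part_xcy_series:
  "q - inverse q \<noteq> 0 \<Longrightarrow> homog_part (2 * Suc m) (xcy_series q) = rsnoc (lcons X (Cat q m)) Y"
  by (simp add: xcy_series_def catalan_y_series_Suc Cat_eq_homog_part homog_part_lcons
      homog_part_rsnoc lcons_rsnoc)

lemma homog_part_0_xcy_series: "homog_part 0 (xcy_series q) = (\<lambda>_. 0)"
  by (auto simp: homog_part_def xcy_series_def lcons_def)

section \<open>Shuffle identities\<close>

fun catalan_coeff :: "'f::field \<Rightarrow> nat \<Rightarrow> 'f" where
  "catalan_coeff q 0 = 1"
| "catalan_coeff q (Suc h) = catalan_coeff q h * (q - inverse q) * inverse q ^ (h + 2)"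

definition xy_coeff :: "'f::field \<Rightarrow> nat \<Rightarrow> 'f" where
  "xy_coeff q h = (if h = 0 then 1 else if h = 1 then inverse q ^ 2 - 1 else 0)"

fun catalan_y_coeff :: "'f::field \<Rightarrow> nat \<Rightarrow> 'f" where
  "catalan_y_coeff q 0 = 1"
| "catalan_y_coeff q (Suc j) = (if j = 0 then 1 else qnat q j) * catalan_y_coeff q j / hdown q (Suc j)"

context
  fixes q :: "'f::field"
  assumes q_diff_inverse: "q - inverse q \<noteq> 0"
begin

lemma qsh_series_catalan_series:
  "qsh_series q (catalan_series q h) (path_series (\<lambda>_. inverse q ^ 4) (\<lambda>k. q ^ 2 * hdown q k) k) w
    = catalan_coeff q h * path_series (\<lambda>_. 1) (\<lambda>k. q ^ 2 * hdown q k) (h + k) w"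
  unfolding catalan_series_def
proof (rule qsh_series_path_series)
  fix h k :: nat
  let ?i = "inverse q ^ (h + 2)"
  have i: "inverse q ^ (2 * h) * inverse q ^ 4 = ?i * ?i"
    unfolding power_add[symmetric] by (rule arg_cong[where f = "\<lambda>n. inverse q ^ n"]) simp
  have "qnat q (h + 2) * ((q - inverse q) * ?i) + inverse q ^ (2 * h) * inverse q ^ 4 =
      (q ^ (h + 2) - ?i) * ?i + ?i * ?i"
    unfolding i mult.assoc[symmetric] qnat_mult_diff[OF q_diff_inverse] ..
  also have "\<dots> = 1"
    by (simp only: left_diff_distrib diff_add_cancel pow_mult_inverse_pow[OF q_diff_inverse])
  finally have bracket: "qnat q (h + 2) * ((q - inverse q) * ?i) + inverse q ^ (2 * h) * inverse q ^ 4 = 1" .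
  have "qnat q (h + 2) * catalan_coeff q (Suc h) + inverse q ^ (2 * h) * inverse q ^ 4 * catalan_coeff q h =
      catalan_coeff q h * (qnat q (h + 2) * ((q - inverse q) * ?i) + inverse q ^ (2 * h) * inverse q ^ 4)"
    by (simp only: catalan_coeff.simps) (simp only: algebra_simps)
  then show "catalan_coeff q h * 1 = qnat q (h + 2) * catalan_coeff q (Suc h) +
      inverse q ^ (2 * h) * inverse q ^ 4 * catalan_coeff q h"
    using bracket by simp
  show "catalan_coeff q h * (q ^ 2 * hdown q (h + k)) = qnat q h * catalan_coeff q (h - 1) +
      q ^ (2 * h) * (q ^ 2 * hdown q k) * catalan_coeff q h"
  proof (cases h)
    case (Suc h')
    have "catalan_coeff q h * q ^ 2 * hdown q h =
        catalan_coeff q h' * (hdown q (Suc h') * (q - inverse q)) * (inverse q ^ h' * inverse q ^ 2) * q ^ 2"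
      unfolding Suc by (simp only: catalan_coeff.simps power_add mult_ac)
    also have "\<dots> = catalan_coeff q h' * (q ^ h' * inverse q ^ h') * (q ^ 2 * inverse q ^ 2) * qnat q h"
      unfolding hdown_Suc[OF q_diff_inverse] Suc by (simp only: mult_ac)
    finally have "catalan_coeff q h * q ^ 2 * hdown q h = qnat q h * catalan_coeff q (h - 1)"
      using Suc by (simp add: pow_mult_inverse_pow[OF q_diff_inverse])
    then show ?thesis
      by (simp add: hdown_add algebra_simps)
  qed (simp add: qnat_def)
qed (simp_all add: qnat_def)

lemma qsh_series_xy_series:
  "qsh_series q (xy_series q h) (Hseries q k) w =
    xy_coeff q h * path_series (\<lambda>_. inverse q ^ 2) (hdown q) (h + k) w"
  unfolding xy_series_def Hseries_def
proof (rule qsh_series_path_series)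
  fix h k :: nat
  show "xy_coeff q h * inverse q ^ 2 =
      (if h = 0 then 1 else 0) * xy_coeff q (Suc h) + inverse q ^ (2 * h) * 1 * xy_coeff q h"
    by (simp add: xy_coeff_def)
  have "(inverse q ^ 2 - 1) * hdown q 1 = - inverse q * (hdown q 1 * (q - inverse q))"
    using q_nonzero[OF q_diff_inverse] by (simp add: algebra_simps power2_eq_square)
  then have "(inverse q ^ 2 - 1) * hdown q 1 = - inverse q"
    by (simp only: hdown_1[OF q_diff_inverse] mult_1_right)
  then show "xy_coeff q h * hdown q (h + k) =
      (if h = 1 then - inverse q else 0) * xy_coeff q (h - 1) + q ^ (2 * h) * hdown q k * xy_coeff q h"
    using hdown_add[of q 1 k] by (auto simp: xy_coeff_def algebra_simps)
qed (simp_all add: xy_coeff_def)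

lemma Cat_Hpart_relation:
  "(\<Sum>a\<le>n. inverse q ^ (2 * (n - a)) * qstar q (Cat q a) (Hpart q (n - a)) w) = q ^ (2 * n) * Hpart q n w"
proof -
  let ?P = "\<lambda>\<alpha>. path_series (\<lambda>_. \<alpha>) (\<lambda>k. q ^ 2 * hdown q k) 0"
  have "inverse q ^ 4 * q ^ 2 = inverse q ^ 2"
    using q_nonzero[OF q_diff_inverse] by (simp add: field_simps)
  moreover have "homog_part (Suc (2 * a)) (catalan_series q 0) = (\<lambda>_. 0)" for a
    by (simp add: catalan_series_def homog_part_odd_path_series)
  ultimately have "homog_part (2 * n) (qsh_series q (catalan_series q 0) (?P (inverse q ^ 4))) w =
      (\<Sum>a\<le>n. inverse q ^ (2 * (n - a)) * qstar q (Cat q a) (Hpart q (n - a)) w)"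
    using q_diff_inverse
    by (simp add: homog_part_qsh_series_even Cat_eq_homog_part[symmetric] homog_part_Hseries_scale qsh_series_smult_right
        qstar_eq_qsh_series finite_supp_Cat finite_supp_Hpart power_mult)
  also have "qsh_series q (catalan_series q 0) (?P (inverse q ^ 4)) = ?P 1"
    using qsh_series_catalan_series[of 0 0] by auto
  finally show ?thesis
    by (simp add: homog_part_Hseries_scale power_mult)
qed

lemma Gt_Hpart_relation:
  "(\<Sum>a\<le>n. (- inverse q) ^ a * qstar q (Gt a) (Hpart q (n - a)) w) = inverse q ^ (2 * n) * Hpart q n w"
proof -
  let ?P = "\<lambda>\<alpha>. path_series (\<lambda>_. \<alpha>) (\<lambda>k. 1 * hdown q k) 0"
  have "homog_part (Suc (2 * a)) (xy_series q 0) = (\<lambda>_. 0)" for a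
    by (simp add: xy_series_def homog_part_odd_path_series)
  then have "homog_part (2 * n) (qsh_series q (xy_series q 0) (?P 1)) w =
      (\<Sum>a\<le>n. (- inverse q) ^ a * qstar q (Gt a) (Hpart q (n - a)) w)"
    by (simp add: homog_part_qsh_series_even homog_part_xy_series qsh_series_smult_left
        qstar_eq_qsh_series finite_supp_Gt finite_supp_homog_part Hpart_def Hseries_def)
  also have "qsh_series q (xy_series q 0) (?P 1) = ?P (inverse q ^ 2)"
    using qsh_series_xy_series[of 0 0] by (auto simp: xy_coeff_def Hseries_def)
  finally show ?thesis
    using homog_part_Hseries_scale[of n "inverse q ^ 2" 1 q] by (simp add: power_mult)
qed

end

context
  fixes q :: "'f::field"
  assumes q_diff_inverse: "q - inverse q \<noteq> 0"
    and q_not_root_of_unity: "\<And>n. 0 < n \<Longrightarrow> q ^ n \<noteq> 1"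
begin

lemma qsh_series_catalan_y_series:
  "qsh_series q (catalan_y_series q j) (Hseries q k) w =
    catalan_y_coeff q j * Hseries q (j + k) w"
  unfolding catalan_y_series_def Hseries_def
proof (rule qsh_series_path_series)
  fix j k :: nat
  show "catalan_y_coeff q j * 1 = (if j = 0 then 0 else qnat q (Suc j)) * catalan_y_coeff q (Suc j) +
      inverse q ^ (2 * j) * 1 * catalan_y_coeff q j"
  proof (cases j)
    case (Suc j')
    have "qnat q (Suc j) * catalan_y_coeff q (Suc j) =
        catalan_y_coeff q j * (qnat q (Suc j) * qnat q j) / hdown q (Suc j)"
      using Suc by (simp add: mult_ac)
    also have "\<dots> = catalan_y_coeff q j * (1 - inverse q ^ (2 * j))"
      using hdown_nonzero[OF q_diff_inverse q_not_root_of_unity, of "Suc j"] by (simp add: hdown_Suc_mult[OF q_diff_inverse q_not_root_of_unity, symmetric])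
    finally show ?thesis
      using Suc by (simp del: catalan_y_coeff.simps add: algebra_simps)
  qed simp
  show "catalan_y_coeff q j * hdown q (j + k) =
      (if j = 1 then 1 else qnat q (j - 1)) * catalan_y_coeff q (j - 1) +
      q ^ (2 * j) * hdown q k * catalan_y_coeff q j"
  proof (cases j)
    case (Suc j')
    have "catalan_y_coeff q j * hdown q j = (if j = 1 then 1 else qnat q (j - 1)) * catalan_y_coeff q j'"
      using Suc hdown_nonzero[OF q_diff_inverse q_not_root_of_unity, of j] by simp
    moreover have "catalan_y_coeff q j * hdown q (j + k) =
        catalan_y_coeff q j * hdown q j + q ^ (2 * j) * hdown q k * catalan_y_coeff q j"
      by (simp only: hdown_add distrib_left mult_ac)
    ultimately show ?thesis
      using Suc by (simp del: catalan_y_coeff.simps)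
  qed (simp add: qnat_def)
qed (simp_all add: qnat_def)

lemma qsh_series_xcy_series:
  "qsh_series q (xcy_series q) (Hseries q k) w =
    (q - inverse q) * (of_nat (count_list w Y) - of_nat k) * Hseries q k w"
proof (induction w arbitrary: k)
  case Nil
  then show ?case by (simp add: xcy_series_def lcons_def Hseries_def)
next
  case (Cons c w)
  have twist: "qtwist q a (xcy_series q) = xcy_series q" for a
    by (rule qtwist_balanced) (rule xcy_series_balanced)
  show ?case
  proof (cases c)
    case X
    have "catalan_y_coeff q 1 = q - inverse q"
      using inverse_unique[OF hdown_1[OF q_diff_inverse]] by (simp add: divide_inverse)
    then have "qsh_series q (catalan_y_series q 1) (Hseries q k) w = (q - inverse q) * Hseries q (Suc k) w"
      using qsh_series_catalan_y_series[of 1 k w] by simp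
    have "qsh_series q (xcy_series q) (Hseries q k) (X # w) =
        qsh_series q (catalan_y_series q 1) (Hseries q k) w + qsh_series q (xcy_series q) (Hseries q (Suc k)) w"
      using twist by (simp add: lquot_xcy_series_X lquot_Hseries_X)
    also have "\<dots> = (q - inverse q) * Hseries q (Suc k) w +
        (q - inverse q) * (of_nat (count_list w Y) - of_nat (Suc k)) * Hseries q (Suc k) w"
      using \<open>qsh_series q (catalan_y_series q 1) (Hseries q k) w = _\<close> Cons.IH by simp
    also have "\<dots> = (q - inverse q) * (of_nat (count_list (X # w) Y) - of_nat k) * Hseries q k (X # w)"
      by (simp add: Hseries_Cons_X algebra_simps)
    finally show ?thesis unfolding X .
  next
    case Y
    have "qsh_series q (xcy_series q) (Hseries q k) (Y # w) =
        hdown q k * qsh_series q (xcy_series q) (Hseries q (k - 1)) w"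
      using twist by (simp add: lquot_xcy_series_Y lquot_Hseries_Y qsh_series_smult_right)
    also have "\<dots> = hdown q k *
        ((q - inverse q) * (of_nat (count_list w Y) - of_nat (k - 1)) * Hseries q (k - 1) w)"
      by (simp only: Cons.IH)
    also have "\<dots> = (q - inverse q) * (of_nat (count_list (Y # w) Y) - of_nat k) * Hseries q k (Y # w)"
      by (cases k) (simp_all add: Hseries_Cons_Y algebra_simps)
    finally show ?thesis unfolding Y .
  qed
qed

lemma xcy_Hpart_relation:
  "(\<Sum>a\<le>n. qstar q (homog_part (2 * a) (xcy_series q)) (Hpart q (n - a)) w) =
    (q - inverse q) * of_nat n * Hpart q n w"
proof -
  have "homog_part (2 * n) (qsh_series q (xcy_series q) (Hseries q 0)) w =
      (\<Sum>a\<le>n. qstar q (homog_part (2 * a) (xcy_series q)) (Hpart q (n - a)) w)"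
    by (simp add: homog_part_qsh_series_even homog_part_odd_balanced xcy_series_balanced
        qstar_eq_qsh_series finite_supp_homog_part finite_supp_Hpart Hpart_def)
  moreover have "homog_part (2 * n) (qsh_series q (xcy_series q) (Hseries q 0)) w =
      (q - inverse q) * of_nat n * Hpart q n w"
  proof (cases "length w = 2 * n \<and> Hseries q 0 w \<noteq> 0")
    case True
    then have "count_list w Y = n"
      using path_series_nonzero_counts[of "\<lambda>_. 1" "hdown q" 0 w] length_eq_count_list_X_Y[of w]
      by (simp add: Hseries_def)
    then show ?thesis
      using qsh_series_xcy_series[of 0 w]
      by (simp add: homog_part_def Hpart_def)
  next
    case False
    then show ?thesis
      using qsh_series_xcy_series[of 0 w]
      by (auto simp: homog_part_def Hpart_def)
  qed
  ultimately show ?thesis by simp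
qed

end

section \<open>Triangular systems in a generated subalgebra\<close>

lemma sum_supp_single_word:
  fixes f :: "'f::semiring_1 vec"
  shows "finite (supp f) \<Longrightarrow> (\<Sum>u\<in>supp f. f u * single_word u w) = f w"
proof -
  have "f u * single_word u w = (if w = u then f u else 0)" for u
    by (simp add: single_word_def)
  moreover assume "finite (supp f)"
  ultimately show ?thesis
    by (simp add: sum.delta' supp_def)
qed

lemma qstar_one_right: "finite (supp f) \<Longrightarrow> qstar q f (single_word []) = f"
proof -
  have "supp (single_word [] :: 'a vec) = {[]}"
    by (simp add: supp_def single_word_def)
  moreover assume "finite (supp f)"
  ultimately show ?thesis
    unfolding qstar_def by (simp add: single_word_def[of "[]"] sum_supp_single_word)
qed

lemma qstar_smult_one_left:
  "finite (supp g) \<Longrightarrow> qstar q (\<lambda>w. \<mu> * single_word [] w) g = (\<lambda>w. \<mu> * g w)"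
proof -
  have "supp (\<lambda>w. \<mu> * single_word [] w) = (if \<mu> = 0 then {} else {[]})"
    by (auto simp: supp_def single_word_def)
  moreover assume "finite (supp g)"
  ultimately show ?thesis
    unfolding qstar_def
    by (simp add: single_word_def[of "[]"] mult.assoc sum_distrib_left[symmetric] sum_supp_single_word)
qed

lemma gen_subalg_sum:
  "finite I \<Longrightarrow> (\<And>i. i \<in> I \<Longrightarrow> f i \<in> gen_subalg q S) \<Longrightarrow> (\<lambda>w. \<Sum>i\<in>I. f i w) \<in> gen_subalg q S"
proof (induction I rule: finite_induct)
  case empty
  then show ?case
    using gen_subalg.smult[OF gen_subalg.one, of 0] by simp
next
  case (insert i I)
  then show ?case
    using gen_subalg.add[of "f i" q S "\<lambda>w. \<Sum>i\<in>I. f i w"] by simp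
qed

lemma gen_subalg_cancel:
  assumes "K \<noteq> 0" and "(\<lambda>w. K * f w) \<in> gen_subalg q S"
  shows "f \<in> gen_subalg q S"
proof -
  have "(\<lambda>w. inverse K * (K * f w)) = f"
    using assms(1) by (simp add: mult.assoc[symmetric])
  then show ?thesis
    using gen_subalg.smult[OF assms(2), of "inverse K"] by simp
qed

lemma gen_subalg_mono: "S \<subseteq> gen_subalg q T \<Longrightarrow> gen_subalg q S \<subseteq> gen_subalg q T"
proof
  fix a assume "S \<subseteq> gen_subalg q T" and "a \<in> gen_subalg q S"
  then show "a \<in> gen_subalg q T"
    by (induction rule: gen_subalg.induct[OF \<open>a \<in> gen_subalg q S\<close>]) (auto intro: gen_subalg.intros)
qed

text \<open>In \<open>relation\<close> the summand \<open>a = n\<close> is \<open>c n n * A n\<close> and the summand \<open>a = 0\<close> is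
  \<open>c n 0 * \<mu> * H n\<close>, so either family can be solved for recursively in terms of the other.\<close>

context
  fixes q :: "'f::field" and A H :: "nat \<Rightarrow> 'f vec" and c :: "nat \<Rightarrow> nat \<Rightarrow> 'f"
    and \<kappa> :: "nat \<Rightarrow> 'f" and \<mu> :: 'f
  assumes relation: "\<And>n w. (\<Sum>a\<le>n. c n a * qstar q (A a) (H (n - a)) w) = \<kappa> n * H n w"
    and finite_supp_A: "\<And>n. finite (supp (A n))"
    and finite_supp_H: "\<And>n. finite (supp (H n))"
    and H_0: "H 0 = single_word []"
    and A_0: "A 0 = (\<lambda>w. \<mu> * single_word [] w)"
begin

lemma triangular_left_mem:
  assumes "\<And>n. 0 < n \<Longrightarrow> c n n \<noteq> 0" and "\<And>n. 0 < n \<Longrightarrow> H n \<in> gen_subalg q S"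
  shows "A n \<in> gen_subalg q S"
proof (induction n rule: less_induct)
  case (less n)
  show ?case
  proof (cases "n = 0")
    case True
    then show ?thesis
      using A_0 gen_subalg.smult[OF gen_subalg.one] by simp
  next
    case False
    let ?R = "\<lambda>w. \<Sum>a<n. c n a * qstar q (A a) (H (n - a)) w"
    have "(\<lambda>w. c n n * A n w) = (\<lambda>w. \<kappa> n * H n w + - 1 * ?R w)"
    proof
      fix w
      show "c n n * A n w = \<kappa> n * H n w + - 1 * ?R w"
        using relation[of n w] qstar_one_right[OF finite_supp_A[of n], where q = q]
        by (simp add: lessThan_Suc_atMost[symmetric] H_0 algebra_simps)
    qed
    moreover have "?R \<in> gen_subalg q S"
      using False less.IH assms(2)
      by (intro gen_subalg_sum gen_subalg.smult gen_subalg.star) auto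
    then have "(\<lambda>w. \<kappa> n * H n w + - 1 * ?R w) \<in> gen_subalg q S"
      using False assms(2) by (intro gen_subalg.add gen_subalg.smult) auto
    ultimately have "(\<lambda>w. c n n * A n w) \<in> gen_subalg q S"
      by (simp only:)
    then show ?thesis
      using False assms(1) by (blast intro: gen_subalg_cancel)
  qed
qed

lemma triangular_right_mem:
  assumes "\<And>n. 0 < n \<Longrightarrow> \<kappa> n \<noteq> c n 0 * \<mu>" and "\<And>n. 0 < n \<Longrightarrow> A n \<in> gen_subalg q S"
  shows "H n \<in> gen_subalg q S"
proof (induction n rule: less_induct)
  case (less n)
  show ?case
  proof (cases "n = 0")
    case True
    then show ?thesis
      using H_0 gen_subalg.one by simp
  next
    case False
    let ?R = "\<lambda>w. \<Sum>a\<in>{1..n}. c n a * qstar q (A a) (H (n - a)) w"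
    have "(\<lambda>w. (\<kappa> n - c n 0 * \<mu>) * H n w) = ?R"
    proof
      fix w
      have "{..n} = insert 0 {1..n}"
        by auto
      then show "(\<kappa> n - c n 0 * \<mu>) * H n w = ?R w"
        using relation[of n w] qstar_smult_one_left[OF finite_supp_H[of n], where q = q and \<mu> = \<mu>]
        by (simp add: A_0 algebra_simps)
    qed
    moreover have "?R \<in> gen_subalg q S"
      using less.IH assms(2)
      by (intro gen_subalg_sum gen_subalg.smult gen_subalg.star) auto
    moreover have "\<kappa> n - c n 0 * \<mu> \<noteq> 0"
      using False assms(1) by simp
    ultimately show ?thesis
      by (metis gen_subalg_cancel)
  qed
qed

lemma gen_subalg_eq_triangular:
  assumes "\<And>n. 0 < n \<Longrightarrow> c n n \<noteq> 0" and "\<And>n. 0 < n \<Longrightarrow> \<kappa> n \<noteq> c n 0 * \<mu>"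
  shows "gen_subalg q {A n | n. n \<ge> 1} = gen_subalg q {H n | n. n \<ge> 1}"
proof
  have "A n \<in> gen_subalg q {H n | n. n \<ge> 1}" for n
    by (rule triangular_left_mem[OF assms(1)]) (auto intro!: gen_subalg.base)
  then show "gen_subalg q {A n | n. n \<ge> 1} \<subseteq> gen_subalg q {H n | n. n \<ge> 1}"
    by (intro gen_subalg_mono) auto
  have "H n \<in> gen_subalg q {A n | n. n \<ge> 1}" for n
    by (rule triangular_right_mem[OF assms(2)]) (auto intro!: gen_subalg.base)
  then show "gen_subalg q {H n | n. n \<ge> 1} \<subseteq> gen_subalg q {A n | n. n \<ge> 1}"
    by (intro gen_subalg_mono) auto
qed

end

section \<open>The three families\<close>

lemma pow_ne_inverse_pow:
  fixes q :: "'f::field"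
  assumes "q \<noteq> 0" and "q ^ (2 * n) \<noteq> 1"
  shows "q ^ n \<noteq> inverse q ^ n"
proof
  assume "q ^ n = inverse q ^ n"
  then have "q ^ n * q ^ n = q ^ n * inverse q ^ n"
    by simp
  also have "\<dots> = 1"
    using assms(1) by (simp add: power_inverse)
  finally have "q ^ n * q ^ n = 1" .
  with assms(2) show False
    by (simp add: mult_2 power_add)
qed

lemma Collect_Suc_eq: "{f (Suc n) | n. True} = {f n | n. n \<ge> 1}"
  by (auto simp: Suc_le_eq gr0_conv_Suc)

context
  fixes q :: "'f::field"
  assumes q_nonzero: "q \<noteq> 0" and q_not_root_of_unity: "\<And>n. 0 < n \<Longrightarrow> q ^ n \<noteq> 1"
begin

lemma q_diff_inverse_nonzero: "q - inverse q \<noteq> 0"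
  using pow_ne_inverse_pow[OF q_nonzero q_not_root_of_unity, of 1] by simp

lemma gen_subalg_Cat_eq_Hpart:
  "gen_subalg q {Cat q n | n. n \<ge> 1} = gen_subalg q {Hpart q n | n. n \<ge> 1}"
proof (rule gen_subalg_eq_triangular)
  show "Cat q 0 = (\<lambda>w. 1 * single_word [] w)"
    using q_diff_inverse_nonzero
    by (auto simp: Cat_eq_homog_part homog_part_def catalan_series_def single_word_def)
  show "q ^ (2 * n) \<noteq> inverse q ^ (2 * (n - 0)) * 1" if "0 < n" for n
    using pow_ne_inverse_pow[OF q_nonzero q_not_root_of_unity, of "2 * n"] that by simp
qed (simp_all add: Cat_Hpart_relation[OF q_diff_inverse_nonzero]
    finite_supp_Cat[OF q_diff_inverse_nonzero] finite_supp_Hpart Hpart_0)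

lemma gen_subalg_Gt_eq_Hpart:
  "gen_subalg q {Gt n | n. n \<ge> 1} = gen_subalg q {Hpart q n | n. n \<ge> 1}"
proof (rule gen_subalg_eq_triangular)
  show "inverse q ^ (2 * n) \<noteq> (- inverse q) ^ 0 * 1" if "0 < n" for n
    using q_not_root_of_unity[of "2 * n"] that by (simp add: power_inverse)
qed (simp_all add: Gt_Hpart_relation[OF q_diff_inverse_nonzero] q_nonzero finite_supp_Gt
    finite_supp_Hpart Hpart_0 Gt_0)

end

text \<open>Here the diagonal coefficient is \<open>(q - q\<^sup>-\<^sup>1) n\<close>, the one place where characteristic 0
  is needed.\<close>

lemma gen_subalg_xCy_eq_Hpart:
  fixes q :: "'f::field_char_0"
  assumes "q \<noteq> 0" and "\<And>n. 0 < n \<Longrightarrow> q ^ n \<noteq> 1"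
  shows "gen_subalg q {rsnoc (lcons X (Cat q n)) Y | n. True} = gen_subalg q {Hpart q n | n. n \<ge> 1}"
proof -
  have q_diff: "q - inverse q \<noteq> 0"
    by (rule q_diff_inverse_nonzero[OF assms])
  have "{rsnoc (lcons X (Cat q n)) Y | n. True} = {homog_part (2 * n) (xcy_series q) | n. n \<ge> 1}"
    unfolding homog_part_xcy_series[OF q_diff, symmetric] by (rule Collect_Suc_eq)
  also have "gen_subalg q \<dots> = gen_subalg q {Hpart q n | n. n \<ge> 1}"
    by (rule gen_subalg_eq_triangular[where c = "\<lambda>_ _. 1" and \<kappa> = "\<lambda>n. (q - inverse q) * of_nat n"
          and \<mu> = 0])
      (use q_diff in \<open>simp_all add: xcy_Hpart_relation[OF q_diff assms(2)] finite_supp_homog_part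
        finite_supp_Hpart Hpart_0 homog_part_0_xcy_series\<close>)
  finally show ?thesis .
qed

theorem corollary9p13:
  fixes q :: "'f::field_char_0"
  assumes "q \<noteq> 0" and "\<forall>n::nat. n > 0 \<longrightarrow> q ^ n \<noteq> 1"
  shows "gen_subalg q {Cat q n | n. n \<ge> 1} = gen_subalg q {rsnoc (lcons X (Cat q n)) Y | n. True}
       \<and> gen_subalg q {Cat q n | n. n \<ge> 1} = gen_subalg q {Gt n | n. n \<ge> 1}"
  using gen_subalg_Cat_eq_Hpart[OF assms(1)] gen_subalg_xCy_eq_Hpart[OF assms(1)]
    gen_subalg_Gt_eq_Hpart[OF assms(1)] assms(2)
  by simp

end
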